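(* Let $G=(V,E)$ be a finite connected graph with boundary $\partial G\subset V$, and let $\alpha\in\Pi(\partial G)$ be a boundary condition. Assume that the graph $G\cup\alpha$ is not a tree and contains at least two vertices. Then for all $p\in(0,1)$ and all $q\in(0,\infty)$ with $q\neq 1$, there exist families $(\varepsilon_e)_{e\in E}\in[0,1]^E$ and $(\varepsilon'_e)_{e\in E}\in[0,1]^E$, neither of which is identically $0$, such that \[\mathbb P^G_{(\min(p,p')+\varepsilon_e)_{e}}\ \preceq\ \phi^\alpha_{G,p,q}\ \preceq\ \mathbb P^G_{(\max(p,p')-\varepsilon'_e)_{e}}.\]
   Context: Configurations are $\omega\in\{0,1\}^E$; an edge $e$ is open if $\omega(e)=1$, closed otherwise; configurations are partially ordered coordinatewise. $\Pi(\partial G)$ denotes the set of partitions of $\partial G$; vertices in the same block of $\alpha$ are called wired. $G\cup\alpha$ is the (multi)graph obtained from $G$ by identifying wired vertices (this may create self-loops). $k(\omega,\alpha)$ is the number of connected components of the graph with vertex set $V$ and edge set the open edges of $\omega$, after identifying wired vertices. For $p\in[0,1]$, $q>0$, the FK (random cluster) measure is \[\phi^\alpha_{G,p,q}(\omega)=\frac1{Z}\Big(\prod_{e\in E}p^{\omega(e)}(1-p)^{1-\omega(e)}\Big)q^{k(\omega,\alpha)},\] $Z$ the normalizing constant. Set $p':=\frac{p}{p+q(1-p)}$. For $(p_e)_{e\in E}\in[0,1]^E$, $\mathbb P^G_{(p_e)}$ is the product measure on $\{0,1\}^E$ under which each edge $e$ is open independently with probability $p_e$. For measures $\mu,\mu'$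 on $\{0,1\}^E$, $\mu\preceq\mu'$ means $\mu(A)\le\mu'(A)$ for every increasing event $A$ (an event preserved by opening edges). *)

theory Defs
  imports Complex_Main "HOL-Library.Disjoint_Sets"
begin

definition simple_graph :: "'v set \<Rightarrow> 'v set set \<Rightarrow> bool" where
  "simple_graph V E \<longleftrightarrow> finite V \<and> E \<subseteq> {{u, v} | u v. u \<in> V \<and> v \<in> V \<and> u \<noteq> v}"

definition graph_connected :: "'v set \<Rightarrow> 'v set set \<Rightarrow> bool" where
  "graph_connected V E \<longleftrightarrow> (\<forall>u\<in>V. \<forall>v\<in>V. (u, v) \<in> {(x, y). {x, y} \<in> E}\<^sup>*)"

(* Multigraphs: vertex set W, edge set Ed, ends e = set of endpoints (singleton for a loop). *)
definition mg_connected :: "'w set \<Rightarrow> 'e set \<Rightarrow> ('e \<Rightarrow> 'w set) \<Rightarrow> bool" where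
  "mg_connected W Ed ends \<longleftrightarrow>
     (\<forall>x\<in>W. \<forall>y\<in>W. (x, y) \<in> {(a, b). \<exists>e\<in>Ed. ends e = {a, b}}\<^sup>*)"

(* A cycle: distinct vertices v_0..v_{n-1}, distinct edges e_0..e_{n-1} (n >= 1),
   e_i joining v_i and v_{i+1 mod n}.  (n = 1: loop, n = 2: double edge.) *)
definition mg_cycle :: "'w set \<Rightarrow> 'e set \<Rightarrow> ('e \<Rightarrow> 'w set) \<Rightarrow> 'w list \<Rightarrow> 'e list \<Rightarrow> bool" where
  "mg_cycle W Ed ends vs es \<longleftrightarrow>
     vs \<noteq> [] \<and> length es = length vs \<and> distinct vs \<and> distinct es \<and>
     set vs \<subseteq> W \<and> set es \<subseteq> Ed \<and>
     (\<forall>i<length vs. ends (es ! i) = {vs ! i, vs ! (Suc i mod length vs)})"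

definition mg_tree :: "'w set \<Rightarrow> 'e set \<Rightarrow> ('e \<Rightarrow> 'w set) \<Rightarrow> bool" where
  "mg_tree W Ed ends \<longleftrightarrow> mg_connected W Ed ends \<and> \<not> (\<exists>vs es. mg_cycle W Ed ends vs es)"

definition wired_rel :: "'v set \<Rightarrow> 'v set set \<Rightarrow> ('v \<times> 'v) set" where
  "wired_rel V \<alpha> = Id_on V \<union> (\<Union>B\<in>\<alpha>. B \<times> B)"

(* The graph G \<union> alpha: vertices = classes of wired vertices, edges = E *)
definition wired_vertices :: "'v set \<Rightarrow> 'v set set \<Rightarrow> 'v set set" where
  "wired_vertices V \<alpha> = V // wired_rel V \<alpha>"

definition wired_ends :: "'v set \<Rightarrow> 'v set set \<Rightarrow> 'v set \<Rightarrow> 'v set set" where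
  "wired_ends V \<alpha> e = (\<lambda>x. wired_rel V \<alpha> `` {x}) ` e"

definition configs :: "'v set set \<Rightarrow> ('v set \<Rightarrow> bool) set" where
  "configs E = {\<omega>. \<forall>e. e \<notin> E \<longrightarrow> \<not> \<omega> e}"

definition open_conn :: "'v set \<Rightarrow> 'v set set \<Rightarrow> 'v set set \<Rightarrow> ('v set \<Rightarrow> bool) \<Rightarrow> ('v \<times> 'v) set" where
  "open_conn V E \<alpha> \<omega> =
     (Id_on V \<union> {(u, v). {u, v} \<in> E \<and> \<omega> {u, v}} \<union> (\<Union>B\<in>\<alpha>. B \<times> B))\<^sup>+"

definition num_clusters :: "'v set \<Rightarrow> 'v set set \<Rightarrow> 'v set set \<Rightarrow> ('v set \<Rightarrow> bool) \<Rightarrow> nat" where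
  "num_clusters V E \<alpha> \<omega> = card (V // open_conn V E \<alpha> \<omega>)"

definition fk_weight :: "'v set \<Rightarrow> 'v set set \<Rightarrow> 'v set set \<Rightarrow> real \<Rightarrow> real \<Rightarrow> ('v set \<Rightarrow> bool) \<Rightarrow> real" where
  "fk_weight V E \<alpha> p q \<omega> =
     (\<Prod>e\<in>E. if \<omega> e then p else 1 - p) * q ^ num_clusters V E \<alpha> \<omega>"

definition fk_measure :: "'v set \<Rightarrow> 'v set set \<Rightarrow> 'v set set \<Rightarrow> real \<Rightarrow> real \<Rightarrow> ('v set \<Rightarrow> bool) set \<Rightarrow> real" where
  "fk_measure V E \<alpha> p q A =
     (\<Sum>\<omega>\<in>A \<inter> configs E. fk_weight V E \<alpha> p q \<omega>) / (\<Sum>\<omega>\<in>configs E. fk_weight V E \<alpha> p q \<omega>)"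

definition bern_measure :: "'v set set \<Rightarrow> ('v set \<Rightarrow> real) \<Rightarrow> ('v set \<Rightarrow> bool) set \<Rightarrow> real" where
  "bern_measure E pe A = (\<Sum>\<omega>\<in>A \<inter> configs E. \<Prod>e\<in>E. if \<omega> e then pe e else 1 - pe e)"

definition increasing_event :: "'v set set \<Rightarrow> ('v set \<Rightarrow> bool) set \<Rightarrow> bool" where
  "increasing_event E A \<longleftrightarrow>
     (\<forall>\<omega>\<in>configs E. \<forall>\<omega>'\<in>configs E. \<omega> \<in> A \<and> (\<forall>e. \<omega> e \<longrightarrow> \<omega>' e) \<longrightarrow> \<omega>' \<in> A)"

definition stoch_dom :: "'v set set \<Rightarrow> (('v set \<Rightarrow> bool) set \<Rightarrow> real) \<Rightarrow> (('v set \<Rightarrow> bool) set \<Rightarrow> real) \<Rightarrow> bool" where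
  "stoch_dom E \<mu> \<mu>' \<longleftrightarrow> (\<forall>A \<subseteq> configs E. increasing_event E A \<longrightarrow> \<mu> A \<le> \<mu>' A)"

definition dual_p :: "real \<Rightarrow> real \<Rightarrow> real" where
  "dual_p p q = p / (p + q * (1 - p))"

end

theory Submission
  imports Defs
begin

text \<open>Conditionally on the states of all other edges, the FK measure opens an edge with
  probability \<open>p\<close> if its endpoints are already connected and with probability \<open>p'\<close> otherwise.
  So every such conditional probability lies between \<open>min p p'\<close> and \<open>max p p'\<close>, and a
  Holley-type induction over the edges, conditioning on one edge at a time, compares the FK
  measure with the product measures of these parameters. A cycle of \<open>G \<union> \<alpha>\<close> yields a
  conditional probability \<open>p\<close>, an edge between distinct wired classes one equal to \<open>p'\<close>. As
  \<open>q \<noteq> 1\<close> these differ, so some edge has marginal strictly above \<open>min p p'\<close> and some edge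
  has marginal strictly below \<open>max p p'\<close>. The inductive step for the last edge added only uses
  the odds of its marginal, so that edge may be given its marginal as parameter; this produces
  the nonzero \<open>\<epsilon>\<close> and \<open>\<epsilon>'\<close>.\<close>

definition config_sum :: "'v set set \<Rightarrow> (('v set \<Rightarrow> bool) \<Rightarrow> real) \<Rightarrow> ('v set \<Rightarrow> bool) set \<Rightarrow> real" where
  "config_sum E w A = (\<Sum>\<omega>\<in>A \<inter> configs E. w \<omega>)"

definition weighted_prob :: "'v set set \<Rightarrow> (('v set \<Rightarrow> bool) \<Rightarrow> real) \<Rightarrow> ('v set \<Rightarrow> bool) set \<Rightarrow> real" where
  "weighted_prob E w A = config_sum E w A / config_sum E w UNIV"

definition edge_odds_ge :: "'v set set \<Rightarrow> ('v set \<Rightarrow> real) \<Rightarrow> (('v set \<Rightarrow> bool) \<Rightarrow> real) \<Rightarrow> bool" where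
  "edge_odds_ge E pe w \<longleftrightarrow>
     (\<forall>\<omega>\<in>configs E. \<forall>e\<in>E. pe e * w (\<omega>(e:=False)) \<le> (1 - pe e) * w (\<omega>(e:=True)))"

definition cond_open_prob :: "(('v set \<Rightarrow> bool) \<Rightarrow> real) \<Rightarrow> ('v set \<Rightarrow> bool) \<Rightarrow> 'v set \<Rightarrow> real" where
  "cond_open_prob w \<omega> e = w (\<omega>(e:=True)) / (w (\<omega>(e:=True)) + w (\<omega>(e:=False)))"

lemma finite_configs: "finite E \<Longrightarrow> finite (configs E)"
proof -
  assume "finite E"
  moreover have "configs E = (\<lambda>S e. e \<in> S) ` Pow E"
    unfolding configs_def by (auto intro!: image_eqI[where x = "Collect _"])
  ultimately show ?thesis by simp
qed

lemma configs_subset_insert: "configs F \<subseteq> configs (insert e F)"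
  unfolding configs_def by blast

lemma fun_upd_True_in_configs: "\<xi> \<in> configs F \<Longrightarrow> \<xi>(e:=True) \<in> configs (insert e F)"
  unfolding configs_def by auto

lemma fun_upd_False_in_configs: "\<omega> \<in> configs E \<Longrightarrow> \<omega>(e:=False) \<in> configs (E - {e})"
  unfolding configs_def by auto

lemma fun_upd_False_config_eq: "\<xi> \<in> configs F \<Longrightarrow> e \<notin> F \<Longrightarrow> \<xi>(e:=False) = \<xi>"
  unfolding configs_def by (intro ext) auto

lemma configs_insert:
  assumes "e \<notin> F"
  shows "configs (insert e F) = (\<lambda>\<xi>. \<xi>(e:=True)) ` configs F \<union> configs F"
proof (intro equalityI subsetI)
  fix \<omega> assume \<omega>: "\<omega> \<in> configs (insert e F)"
  show "\<omega> \<in> (\<lambda>\<xi>. \<xi>(e:=True)) ` configs F \<union> configs F"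
  proof (cases "\<omega> e")
    case True
    then have "\<omega> = (\<omega>(e:=False))(e:=True)" by (auto simp: fun_eq_iff)
    moreover have "\<omega>(e:=False) \<in> configs F" using \<omega> by (auto simp: configs_def)
    ultimately show ?thesis by blast
  qed (use \<omega> in \<open>auto simp: configs_def\<close>)
qed (use fun_upd_True_in_configs configs_subset_insert in blast)

lemma config_sum_if:
  "finite E \<Longrightarrow> config_sum E w A = (\<Sum>\<omega>\<in>configs E. if \<omega> \<in> A then w \<omega> else 0)"
  unfolding config_sum_def by (subst Int_commute) (rule sum.inter_restrict[OF finite_configs])

lemma config_sum_insert:
  assumes "finite F" "e \<notin> F"
  shows "config_sum (insert e F) w A
    = config_sum F (\<lambda>\<xi>. w (\<xi>(e:=True))) {\<xi>. \<xi>(e:=True) \<in> A} + config_sum F w A"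
proof -
  let ?up = "\<lambda>\<xi>. \<xi>(e:=True)"
  have disj: "?up ` configs F \<inter> configs F = {}"
    using assms(2) by (auto simp: configs_def)
  have inj: "inj_on ?up (configs F)"
  proof (rule inj_onI)
    fix \<xi> \<eta> assume "\<xi> \<in> configs F" "\<eta> \<in> configs F" "?up \<xi> = ?up \<eta>"
    then show "\<xi> = \<eta>"
      using fun_upd_False_config_eq[OF _ assms(2)] by (metis fun_upd_upd)
  qed
  have fin: "finite (configs F)" using assms(1) by (rule finite_configs)
  have "config_sum (insert e F) w A = (\<Sum>\<omega>\<in>configs (insert e F). if \<omega> \<in> A then w \<omega> else 0)"
    using assms(1) by (simp add: config_sum_if)
  also have "\<dots> = (\<Sum>\<omega>\<in>?up ` configs F. if \<omega> \<in> A then w \<omega> else 0)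
                  + (\<Sum>\<omega>\<in>configs F. if \<omega> \<in> A then w \<omega> else 0)"
    unfolding configs_insert[OF assms(2)] using fin disj by (simp add: sum.union_disjoint)
  also have "\<dots> = (\<Sum>\<xi>\<in>configs F. if ?up \<xi> \<in> A then w (?up \<xi>) else 0)
                  + (\<Sum>\<omega>\<in>configs F. if \<omega> \<in> A then w \<omega> else 0)"
    by (simp add: sum.reindex[OF inj])
  also have "\<dots> = config_sum F (\<lambda>\<xi>. w (?up \<xi>)) {\<xi>. ?up \<xi> \<in> A} + config_sum F w A"
    using assms(1) by (simp add: config_sum_if)
  finally show ?thesis .
qed

lemma config_sum_split:
  "finite E \<Longrightarrow> config_sum E w UNIV = config_sum E w {\<omega>. \<omega> e} + config_sum E w {\<omega>. \<not> \<omega> e}"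
  unfolding config_sum_def using finite_configs[of E]
  by (simp add: sum.Int_Diff[of "configs E" _ "{\<omega>. \<omega> e}"] Int_commute Diff_eq Compl_eq)

lemma config_sum_open:
  assumes "finite E" "e \<in> E"
  shows "config_sum E w {\<omega>. \<omega> e} = config_sum (E - {e}) (\<lambda>\<xi>. w (\<xi>(e:=True))) UNIV"
proof -
  have "{\<omega>. \<omega> e} \<inter> configs (E - {e}) = {}" by (auto simp: configs_def)
  then show ?thesis
    using config_sum_insert[of "E - {e}" e w "{\<omega>. \<omega> e}"] assms
    by (simp add: insert_absorb config_sum_def)
qed

lemma config_sum_closed:
  assumes "finite E" "e \<in> E"
  shows "config_sum E w {\<omega>. \<not> \<omega> e} = config_sum (E - {e}) w UNIV"
  using config_sum_insert[of "E - {e}" e w "{\<omega>. \<not> \<omega> e}"] assms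
  by (simp add: insert_absorb config_sum_def configs_def Int_absorb1 subset_iff)

lemma bern_measure_eq_config_sum:
  "bern_measure E pe = config_sum E (\<lambda>\<omega>. \<Prod>e\<in>E. if \<omega> e then pe e else 1 - pe e)"
  unfolding bern_measure_def config_sum_def by (rule ext) (rule refl)

lemma bern_measure_insert:
  assumes "finite F" "e \<notin> F"
  shows "bern_measure (insert e F) pe A
    = pe e * bern_measure F pe {\<xi>. \<xi>(e:=True) \<in> A} + (1 - pe e) * bern_measure F pe A"
proof -
  have up: "(\<Prod>e'\<in>insert e F. if (\<xi>(e:=True)) e' then pe e' else 1 - pe e')
      = pe e * (\<Prod>e'\<in>F. if \<xi> e' then pe e' else 1 - pe e')" for \<xi>
    using assms by (auto intro!: prod.cong)
  have down: "(\<Prod>e'\<in>insert e F. if \<xi> e' then pe e' else 1 - pe e')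
      = (1 - pe e) * (\<Prod>e'\<in>F. if \<xi> e' then pe e' else 1 - pe e')" if "\<xi> \<in> configs F" for \<xi>
    using assms that by (simp add: configs_def)
  show ?thesis
    unfolding bern_measure_eq_config_sum config_sum_insert[OF assms] up
    by (simp add: config_sum_def down sum_distrib_left)
qed

lemma bern_measure_cong:
  "(\<And>e. e \<in> E \<Longrightarrow> pe e = pe' e) \<Longrightarrow> bern_measure E pe = bern_measure E pe'"
  unfolding bern_measure_def by (intro ext sum.cong prod.cong) auto

lemma bern_measure_mono:
  assumes "finite E" "\<forall>e\<in>E. 0 \<le> pe e \<and> pe e \<le> 1" "A \<inter> configs E \<subseteq> B"
  shows "bern_measure E pe A \<le> bern_measure E pe B"
  unfolding bern_measure_def using assms finite_configs[OF assms(1)]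
  by (intro sum_mono2) (auto intro!: prod_nonneg)

lemma increasing_event_insert_closed:
  "increasing_event (insert e F) A \<Longrightarrow> increasing_event F A"
  unfolding increasing_event_def using configs_subset_insert by blast

lemma increasing_event_insert_open:
  assumes "increasing_event (insert e F) A"
  shows "increasing_event F {\<xi>. \<xi>(e:=True) \<in> A}"
  unfolding increasing_event_def
proof (intro ballI impI)
  fix \<omega> \<omega>' assume \<omega>: "\<omega> \<in> configs F" "\<omega>' \<in> configs F"
    and le: "\<omega> \<in> {\<xi>. \<xi>(e:=True) \<in> A} \<and> (\<forall>e. \<omega> e \<longrightarrow> \<omega>' e)"
  have "\<forall>e'. (\<omega>(e:=True)) e' \<longrightarrow> (\<omega>'(e:=True)) e'" using le by simp
  then have "\<omega>'(e:=True) \<in> A"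
    using assms le fun_upd_True_in_configs[OF \<omega>(1)] fun_upd_True_in_configs[OF \<omega>(2)]
    unfolding increasing_event_def by blast
  then show "\<omega>' \<in> {\<xi>. \<xi>(e:=True) \<in> A}" by simp
qed

lemma increasing_event_open_superset:
  assumes "increasing_event (insert e F) A"
  shows "A \<inter> configs F \<subseteq> {\<xi>. \<xi>(e:=True) \<in> A}"
proof
  fix \<xi> assume \<xi>: "\<xi> \<in> A \<inter> configs F"
  have "\<forall>e'. \<xi> e' \<longrightarrow> (\<xi>(e:=True)) e'" by simp
  then have "\<xi>(e:=True) \<in> A"
    using assms \<xi> configs_subset_insert fun_upd_True_in_configs unfolding increasing_event_def by blast
  then show "\<xi> \<in> {\<xi>. \<xi>(e:=True) \<in> A}" by simp
qed

lemma edge_odds_ge_insert: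
  assumes "edge_odds_ge (insert e F) pe w" "e \<notin> F"
  shows "edge_odds_ge F pe w" "edge_odds_ge F pe (\<lambda>\<xi>. w (\<xi>(e:=True)))"
proof -
  show "edge_odds_ge F pe w"
    using assms(1) configs_subset_insert unfolding edge_odds_ge_def by blast
  show "edge_odds_ge F pe (\<lambda>\<xi>. w (\<xi>(e:=True)))"
    unfolding edge_odds_ge_def
  proof (intro ballI)
    fix \<omega> e' assume "\<omega> \<in> configs F" "e' \<in> F"
    moreover have "e' \<noteq> e" using \<open>e' \<in> F\<close> assms(2) by auto
    ultimately show "pe e' * w (\<omega>(e':=False, e:=True)) \<le> (1 - pe e') * w (\<omega>(e':=True, e:=True))"
      using assms(1) fun_upd_True_in_configs unfolding edge_odds_ge_def
      by (metis fun_upd_twist insertCI)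
  qed
qed

lemma edge_odds_ge_closed_config:
  assumes "e \<in> E" "edge_odds_ge E pe w" "\<xi> \<in> configs (E - {e})"
  shows "pe e * w \<xi> \<le> (1 - pe e) * w (\<xi>(e:=True))"
proof -
  have "\<xi> \<in> configs E" using assms(3) by (auto simp: configs_def)
  then have "pe e * w (\<xi>(e:=False)) \<le> (1 - pe e) * w (\<xi>(e:=True))"
    using assms(1,2) unfolding edge_odds_ge_def by blast
  then show ?thesis using fun_upd_False_config_eq[OF assms(3)] by simp
qed

lemma edge_odds_ge_sum_le:
  assumes "finite E" "e \<in> E" "edge_odds_ge E pe w"
  shows "pe e * config_sum E w {\<omega>. \<not> \<omega> e} \<le> (1 - pe e) * config_sum E w {\<omega>. \<omega> e}"
  unfolding config_sum_open[OF assms(1,2)] config_sum_closed[OF assms(1,2)]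
  using edge_odds_ge_closed_config[OF assms(2,3)]
  by (simp add: config_sum_def sum_distrib_left sum_mono)

lemma edge_odds_ge_sum_less:
  assumes "finite E" "e \<in> E" "edge_odds_ge E pe w" "\<omega>0 \<in> configs E"
    and "pe e * w (\<omega>0(e:=False)) < (1 - pe e) * w (\<omega>0(e:=True))"
  shows "pe e * config_sum E w {\<omega>. \<not> \<omega> e} < (1 - pe e) * config_sum E w {\<omega>. \<omega> e}"
proof -
  have "\<exists>\<xi>\<in>configs (E - {e}). pe e * w \<xi> < (1 - pe e) * w (\<xi>(e:=True))"
    using assms(4,5) fun_upd_False_in_configs by (intro bexI[of _ "\<omega>0(e:=False)"]) simp_all
  then have "(\<Sum>\<xi>\<in>configs (E - {e}). pe e * w \<xi>)
      < (\<Sum>\<xi>\<in>configs (E - {e}). (1 - pe e) * w (\<xi>(e:=True)))"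
    using edge_odds_ge_closed_config[OF assms(2,3)] finite_configs[of "E - {e}"] assms(1)
    by (intro sum_strict_mono_ex1) auto
  then show ?thesis
    unfolding config_sum_open[OF assms(1,2)] config_sum_closed[OF assms(1,2)]
    by (simp add: config_sum_def sum_distrib_left)
qed

text \<open>Conditioning on the state of \<open>e\<close> writes both sides as two-term mixtures; the odds
  condition on the marginal of \<open>e\<close> makes the cross term \<open>(B1 - B0) ((1 - pe e) W1 - pe e W0)\<close>
  nonnegative, since \<open>B0 \<le> B1\<close> for increasing events.\<close>

lemma bern_measure_le_config_sum_insert:
  assumes F: "finite F" "e \<notin> F" and pe: "\<forall>e\<in>F. 0 \<le> pe e \<and> pe e \<le> 1"
    and inc: "increasing_event (insert e F) A"
    and le_open: "bern_measure F pe {\<xi>. \<xi>(e:=True) \<in> A} * config_sum F (\<lambda>\<xi>. w (\<xi>(e:=True))) UNIV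
      \<le> config_sum F (\<lambda>\<xi>. w (\<xi>(e:=True))) {\<xi>. \<xi>(e:=True) \<in> A}"
    and le_closed: "bern_measure F pe A * config_sum F w UNIV \<le> config_sum F w A"
    and odds: "pe e * config_sum F w UNIV \<le> (1 - pe e) * config_sum F (\<lambda>\<xi>. w (\<xi>(e:=True))) UNIV"
  shows "bern_measure (insert e F) pe A * config_sum (insert e F) w UNIV \<le> config_sum (insert e F) w A"
proof -
  define B1 where "B1 = bern_measure F pe {\<xi>. \<xi>(e:=True) \<in> A}"
  define B0 where "B0 = bern_measure F pe A"
  define W1 where "W1 = config_sum F (\<lambda>\<xi>. w (\<xi>(e:=True))) UNIV"
  define W0 where "W0 = config_sum F w UNIV"
  have "B0 \<le> B1"
    unfolding B0_def B1_def
    by (rule bern_measure_mono[OF F(1) pe increasing_event_open_superset[OF inc]])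
  then have cross: "0 \<le> (B1 - B0) * ((1 - pe e) * W1 - pe e * W0)"
    using odds unfolding W0_def W1_def by simp
  have "bern_measure (insert e F) pe A * config_sum (insert e F) w UNIV
      = (pe e * B1 + (1 - pe e) * B0) * (W1 + W0)"
    unfolding bern_measure_insert[OF F] config_sum_insert[OF F] B0_def B1_def W0_def W1_def by simp
  also have "\<dots> = B1 * W1 + B0 * W0 - (B1 - B0) * ((1 - pe e) * W1 - pe e * W0)"
    by (simp add: algebra_simps)
  also have "\<dots> \<le> config_sum (insert e F) w A"
    unfolding config_sum_insert[OF F]
    using le_open le_closed cross unfolding B0_def B1_def W0_def W1_def by linarith
  finally show ?thesis .
qed

text \<open>A Holley-type comparison. No positivity of \<open>w\<close> is needed, so the reverse comparison
  is obtained by applying it to \<open>-w\<close>.\<close>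

lemma bern_measure_le_config_sum:
  assumes "finite E" "\<forall>e\<in>E. 0 \<le> pe e \<and> pe e \<le> 1" "edge_odds_ge E pe w" "increasing_event E A"
  shows "bern_measure E pe A * config_sum E w UNIV \<le> config_sum E w A"
  using assms
proof (induction E arbitrary: w A rule: finite_induct)
  case empty
  have configs_empty: "configs {} = {\<lambda>_. False}" by (auto simp: configs_def)
  show ?case
    unfolding bern_measure_def config_sum_def configs_empty by (cases "(\<lambda>_. False) \<in> A") auto
next
  case (insert e F)
  note odds_F = edge_odds_ge_insert[OF insert.prems(2) insert.hyps(2)]
  show ?case
  proof (rule bern_measure_le_config_sum_insert[OF insert.hyps(1,2) _ insert.prems(3)])
    show "\<forall>e\<in>F. 0 \<le> pe e \<and> pe e \<le> 1" using insert.prems(1) by blast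
    show "bern_measure F pe {\<xi>. \<xi>(e:=True) \<in> A} * config_sum F (\<lambda>\<xi>. w (\<xi>(e:=True))) UNIV
      \<le> config_sum F (\<lambda>\<xi>. w (\<xi>(e:=True))) {\<xi>. \<xi>(e:=True) \<in> A}"
      using insert.IH insert.prems(1) odds_F(2) increasing_event_insert_open[OF insert.prems(3)]
      by blast
    show "bern_measure F pe A * config_sum F w UNIV \<le> config_sum F w A"
      using insert.IH insert.prems(1) odds_F(1) increasing_event_insert_closed[OF insert.prems(3)]
      by blast
    show "pe e * config_sum F w UNIV \<le> (1 - pe e) * config_sum F (\<lambda>\<xi>. w (\<xi>(e:=True))) UNIV"
      using edge_odds_ge_sum_le[of "insert e F" e pe w] insert.hyps insert.prems(2)
      by (simp add: config_sum_open config_sum_closed)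
  qed
qed

lemma bern_measure_le_config_sum_marginal:
  assumes fin: "finite E" and e0: "e0 \<in> E" and pe: "\<forall>e\<in>E. 0 \<le> pe e \<and> pe e \<le> 1"
    and odds: "edge_odds_ge E pe w" and nz: "config_sum E w UNIV \<noteq> 0"
    and inc: "increasing_event E A"
  shows "bern_measure E (pe(e0 := weighted_prob E w {\<omega>. \<omega> e0})) A * config_sum E w UNIV
    \<le> config_sum E w A"
proof -
  define F where "F = E - {e0}"
  have EF: "E = insert e0 F" and finF: "finite F" and e0F: "e0 \<notin> F"
    using e0 fin by (auto simp: F_def)
  define m where "m = weighted_prob E w {\<omega>. \<omega> e0}"
  define W1 where "W1 = config_sum F (\<lambda>\<xi>. w (\<xi>(e0:=True))) UNIV"
  define W0 where "W0 = config_sum F w UNIV"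
  have W: "config_sum E w UNIV = W1 + W0"
    unfolding EF config_sum_insert[OF finF e0F] W0_def W1_def by simp
  have "m = W1 / (W1 + W0)"
    unfolding m_def weighted_prob_def W W1_def F_def config_sum_open[OF fin e0] ..
  then have marginal: "m * W0 = (1 - m) * W1"
    using nz unfolding W by (simp add: field_simps)
  have same_F: "bern_measure F (pe(e0 := m)) = bern_measure F pe"
    using e0F by (intro bern_measure_cong) auto
  note odds_F = edge_odds_ge_insert[OF odds[unfolded EF] e0F]
  have pe_F: "\<forall>e\<in>F. 0 \<le> pe e \<and> pe e \<le> 1" using pe EF by blast
  show ?thesis
    unfolding m_def[symmetric] unfolding EF
  proof (rule bern_measure_le_config_sum_insert[OF finF e0F])
    show "\<forall>e\<in>F. 0 \<le> (pe(e0 := m)) e \<and> (pe(e0 := m)) e \<le> 1" using pe_F e0F by simp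
    show inc': "increasing_event (insert e0 F) A" using inc EF by simp
    show "bern_measure F (pe(e0 := m)) {\<xi>. \<xi>(e0:=True) \<in> A}
        * config_sum F (\<lambda>\<xi>. w (\<xi>(e0:=True))) UNIV
      \<le> config_sum F (\<lambda>\<xi>. w (\<xi>(e0:=True))) {\<xi>. \<xi>(e0:=True) \<in> A}"
      using bern_measure_le_config_sum[OF finF pe_F odds_F(2) increasing_event_insert_open[OF inc']]
      unfolding same_F .
    show "bern_measure F (pe(e0 := m)) A * config_sum F w UNIV \<le> config_sum F w A"
      using bern_measure_le_config_sum[OF finF pe_F odds_F(1) increasing_event_insert_closed[OF inc']]
      unfolding same_F .
    show "(pe(e0 := m)) e0 * config_sum F w UNIV
      \<le> (1 - (pe(e0 := m)) e0) * config_sum F (\<lambda>\<xi>. w (\<xi>(e0:=True))) UNIV"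
      using marginal unfolding W0_def W1_def by simp
  qed
qed

lemma odds_le_iff_le_ratio:
  fixes a b c :: real
  assumes "0 < a" "0 < b"
  shows "c * b \<le> (1 - c) * a \<longleftrightarrow> c \<le> a / (a + b)"
    and "c * b < (1 - c) * a \<longleftrightarrow> c < a / (a + b)"
  using assms by (simp_all add: field_simps)

lemma cond_open_prob_bounds:
  assumes pos: "\<forall>\<omega>\<in>configs E. 0 < w \<omega>" and "\<omega> \<in> configs E" "e \<in> E"
  shows "c * w (\<omega>(e:=False)) \<le> (1 - c) * w (\<omega>(e:=True)) \<longleftrightarrow> c \<le> cond_open_prob w \<omega> e"
    and "c * w (\<omega>(e:=False)) < (1 - c) * w (\<omega>(e:=True)) \<longleftrightarrow> c < cond_open_prob w \<omega> e"
proof -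
  have "\<omega>(e:=b) \<in> configs E" for b using assms(2,3) by (auto simp: configs_def)
  then have "0 < w (\<omega>(e:=True))" "0 < w (\<omega>(e:=False))" using pos by blast+
  then show "c * w (\<omega>(e:=False)) \<le> (1 - c) * w (\<omega>(e:=True)) \<longleftrightarrow> c \<le> cond_open_prob w \<omega> e"
    and "c * w (\<omega>(e:=False)) < (1 - c) * w (\<omega>(e:=True)) \<longleftrightarrow> c < cond_open_prob w \<omega> e"
    unfolding cond_open_prob_def by (simp_all add: odds_le_iff_le_ratio)
qed

lemma config_sum_pos:
  assumes "finite E" "\<forall>\<omega>\<in>configs E. 0 < w \<omega>"
  shows "0 < config_sum E w UNIV"
proof -
  have "(\<lambda>_. False) \<in> configs E" by (simp add: configs_def)
  then show ?thesis
    unfolding config_sum_def using assms finite_configs by (auto intro!: sum_pos)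
qed

lemma config_sum_nonneg:
  "\<forall>\<omega>\<in>configs E. 0 < w \<omega> \<Longrightarrow> 0 \<le> config_sum E w A"
  unfolding config_sum_def by (rule sum_nonneg) (auto simp: less_imp_le)

lemma config_sum_uminus: "config_sum E (\<lambda>\<omega>. - w \<omega>) A = - config_sum E w A"
  unfolding config_sum_def by (simp add: sum_negf)

lemma stoch_dom_bern_measure_lower_strict:
  assumes fin: "finite E" and pos: "\<forall>\<omega>\<in>configs E. 0 < w \<omega>" and c: "0 \<le> c" "c \<le> 1"
    and ge: "\<forall>\<omega>\<in>configs E. \<forall>e\<in>E. c \<le> cond_open_prob w \<omega> e"
    and e0: "e0 \<in> E" and \<omega>0: "\<omega>0 \<in> configs E" and gt: "c < cond_open_prob w \<omega>0 e0"
  shows "\<exists>m. c < m \<and> m \<le> 1 \<and> stoch_dom E (bern_measure E ((\<lambda>_. c)(e0 := m))) (weighted_prob E w)"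
proof -
  define m where "m = weighted_prob E w {\<omega>. \<omega> e0}"
  have odds: "edge_odds_ge E (\<lambda>_. c) w"
    unfolding edge_odds_ge_def using ge cond_open_prob_bounds(1)[OF pos] by blast
  have W: "0 < config_sum E w UNIV" by (rule config_sum_pos[OF fin pos])
  have "c * config_sum E w {\<omega>. \<not> \<omega> e0} < (1 - c) * config_sum E w {\<omega>. \<omega> e0}"
    using edge_odds_ge_sum_less[OF fin e0 odds \<omega>0] cond_open_prob_bounds(2)[OF pos \<omega>0 e0] gt
    by simp
  then have "c < m" "m \<le> 1"
    using W config_sum_split[OF fin, of w e0] config_sum_nonneg[OF pos, of "{\<omega>. \<not> \<omega> e0}"]
    unfolding m_def weighted_prob_def by (simp_all add: field_simps)
  moreover have "bern_measure E ((\<lambda>_. c)(e0 := m)) A \<le> weighted_prob E w A"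
    if "increasing_event E A" for A
    using bern_measure_le_config_sum_marginal[OF fin e0 _ odds _ that, folded m_def] c W
    unfolding weighted_prob_def[of E w A] by (simp add: pos_le_divide_eq)
  then have "stoch_dom E (bern_measure E ((\<lambda>_. c)(e0 := m))) (weighted_prob E w)"
    unfolding stoch_dom_def by blast
  ultimately show ?thesis by blast
qed

lemma stoch_dom_bern_measure_upper_strict:
  assumes fin: "finite E" and pos: "\<forall>\<omega>\<in>configs E. 0 < w \<omega>" and c: "0 \<le> c" "c \<le> 1"
    and le: "\<forall>\<omega>\<in>configs E. \<forall>e\<in>E. cond_open_prob w \<omega> e \<le> c"
    and e0: "e0 \<in> E" and \<omega>0: "\<omega>0 \<in> configs E" and lt: "cond_open_prob w \<omega>0 e0 < c"
  shows "\<exists>m. 0 \<le> m \<and> m < c \<and> stoch_dom E (weighted_prob E w) (bern_measure E ((\<lambda>_. c)(e0 := m)))"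
proof -
  define m where "m = weighted_prob E w {\<omega>. \<omega> e0}"
  have odds: "edge_odds_ge E (\<lambda>_. c) (\<lambda>\<omega>. - w \<omega>)"
    unfolding edge_odds_ge_def
  proof (intro ballI)
    fix \<omega> e assume "\<omega> \<in> configs E" "e \<in> E"
    then have "\<not> c * w (\<omega>(e:=False)) < (1 - c) * w (\<omega>(e:=True))"
      using le cond_open_prob_bounds(2)[OF pos] by (simp add: not_less)
    then show "c * - w (\<omega>(e:=False)) \<le> (1 - c) * - w (\<omega>(e:=True))" by simp
  qed
  have W: "0 < config_sum E w UNIV" by (rule config_sum_pos[OF fin pos])
  have "\<not> c * w (\<omega>0(e0:=False)) \<le> (1 - c) * w (\<omega>0(e0:=True))"
    using cond_open_prob_bounds(1)[OF pos \<omega>0 e0] lt by simp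
  then have "c * - w (\<omega>0(e0:=False)) < (1 - c) * - w (\<omega>0(e0:=True))" by simp
  then have "c * config_sum E w {\<omega>. \<not> \<omega> e0} > (1 - c) * config_sum E w {\<omega>. \<omega> e0}"
    using edge_odds_ge_sum_less[OF fin e0 odds \<omega>0] by (simp add: config_sum_uminus)
  then have "m < c" "0 \<le> m"
    using W config_sum_split[OF fin, of w e0] config_sum_nonneg[OF pos, of "{\<omega>. \<omega> e0}"]
    unfolding m_def weighted_prob_def by (simp_all add: field_simps)
  moreover have "weighted_prob E (\<lambda>\<omega>. - w \<omega>) {\<omega>. \<omega> e0} = m"
    unfolding m_def weighted_prob_def config_sum_uminus by simp
  then have "weighted_prob E w A \<le> bern_measure E ((\<lambda>_. c)(e0 := m)) A"
    if "increasing_event E A" for A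
    using bern_measure_le_config_sum_marginal[OF fin e0 _ odds _ that] c W
    unfolding weighted_prob_def[of E w A] by (simp add: config_sum_uminus pos_divide_le_eq)
  then have "stoch_dom E (weighted_prob E w) (bern_measure E ((\<lambda>_. c)(e0 := m)))"
    unfolding stoch_dom_def by blast
  ultimately show ?thesis by blast
qed

lemma stoch_dom_bern_measure_sandwich:
  assumes fin: "finite E" and pos: "\<forall>\<omega>\<in>configs E. 0 < w \<omega>"
    and c: "0 \<le> c" "c < c'" "c' \<le> 1"
    and range: "\<forall>\<omega>\<in>configs E. \<forall>e\<in>E. c \<le> cond_open_prob w \<omega> e \<and> cond_open_prob w \<omega> e \<le> c'"
    and attained: "\<exists>e\<in>E. \<exists>\<omega>\<in>configs E. cond_open_prob w \<omega> e = c"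
      "\<exists>e\<in>E. \<exists>\<omega>\<in>configs E. cond_open_prob w \<omega> e = c'"
  shows "\<exists>\<epsilon> \<epsilon>'.
     (\<forall>e\<in>E. 0 \<le> \<epsilon> e \<and> \<epsilon> e \<le> 1 \<and> 0 \<le> \<epsilon>' e \<and> \<epsilon>' e \<le> 1) \<and>
     (\<exists>e\<in>E. \<epsilon> e \<noteq> 0) \<and> (\<exists>e\<in>E. \<epsilon>' e \<noteq> 0) \<and>
     (\<forall>e\<in>E. c + \<epsilon> e \<le> 1 \<and> 0 \<le> c' - \<epsilon>' e) \<and>
     stoch_dom E (bern_measure E (\<lambda>e. c + \<epsilon> e)) (weighted_prob E w) \<and>
     stoch_dom E (weighted_prob E w) (bern_measure E (\<lambda>e. c' - \<epsilon>' e))"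
proof -
  obtain e1 \<omega>1 e0 \<omega>0 where e1: "e1 \<in> E" "\<omega>1 \<in> configs E" "cond_open_prob w \<omega>1 e1 = c"
    and e0: "e0 \<in> E" "\<omega>0 \<in> configs E" "cond_open_prob w \<omega>0 e0 = c'"
    using attained by blast
  obtain m where m: "c < m" "m \<le> 1"
    and lower: "stoch_dom E (bern_measure E ((\<lambda>_. c)(e0 := m))) (weighted_prob E w)"
    using stoch_dom_bern_measure_lower_strict[OF fin pos, of c e0 \<omega>0] range e0 c by auto
  obtain m' where m': "0 \<le> m'" "m' < c'"
    and upper: "stoch_dom E (weighted_prob E w) (bern_measure E ((\<lambda>_. c')(e1 := m')))"
    using stoch_dom_bern_measure_upper_strict[OF fin pos, of c' e1 \<omega>1] range e1 c by auto
  define \<epsilon> where "\<epsilon> = (\<lambda>_. 0)(e0 := m - c)"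
  define \<epsilon>' where "\<epsilon>' = (\<lambda>_. 0)(e1 := c' - m')"
  have "(\<lambda>e. c + \<epsilon> e) = (\<lambda>_. c)(e0 := m)" "(\<lambda>e. c' - \<epsilon>' e) = (\<lambda>_. c')(e1 := m')"
    unfolding \<epsilon>_def \<epsilon>'_def by auto
  then show ?thesis
    using lower upper m m' c e0(1) e1(1)
    by (intro exI[of _ \<epsilon>] exI[of _ \<epsilon>'] conjI) (auto simp: \<epsilon>_def \<epsilon>'_def)
qed

lemma Image_Image_equiv_class:
  assumes R: "equiv V R" and S: "equiv V S" and RS: "R \<subseteq> S" and x: "x \<in> V"
  shows "S `` (R `` {x}) = S `` {x}"
proof
  show "S `` {x} \<subseteq> S `` (R `` {x})"
    using equiv_class_self[OF R x] by blast
  show "S `` (R `` {x}) \<subseteq> S `` {x}"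
    using RS S unfolding equiv_def trans_def by blast
qed

lemma quotient_image_coarser:
  assumes R: "equiv V R" and S: "equiv V S" and RS: "R \<subseteq> S"
  shows "(\<lambda>X. S `` X) ` (V // R) = V // S"
proof
  show "(\<lambda>X. S `` X) ` (V // R) \<subseteq> V // S"
    by (auto elim!: quotientE simp: Image_Image_equiv_class[OF R S RS] intro: quotientI)
  show "V // S \<subseteq> (\<lambda>X. S `` X) ` (V // R)"
  proof
    fix Y assume "Y \<in> V // S"
    then obtain x where "x \<in> V" "Y = S `` {x}" by (auto elim!: quotientE)
    then show "Y \<in> (\<lambda>X. S `` X) ` (V // R)"
      using Image_Image_equiv_class[OF R S RS]
      by (intro image_eqI[of _ _ "R `` {x}"]) (auto intro: quotientI)
  qed
qed

lemma card_quotient_coarser_le: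
  assumes "equiv V R" "equiv V S" "R \<subseteq> S" "finite V"
  shows "card (V // S) \<le> card (V // R)"
  using card_image_le[OF finite_quotient[OF assms(4) equiv_type[OF assms(1)]], of "\<lambda>X. S `` X"]
    quotient_image_coarser[OF assms(1-3)] by simp

lemma card_quotient_coarser_less:
  assumes R: "equiv V R" and S: "equiv V S" and RS: "R \<subseteq> S" and fin: "finite V"
    and uv: "(u, v) \<in> S" "(u, v) \<notin> R"
  shows "card (V // S) < card (V // R)"
proof -
  have uV: "u \<in> V" "v \<in> V" using uv S unfolding equiv_def by auto
  have "\<not> inj_on (\<lambda>X. S `` X) (V // R)"
  proof
    assume inj: "inj_on (\<lambda>X. S `` X) (V // R)"
    have "S `` (R `` {u}) = S `` (R `` {v})"
      using equiv_class_eq_iff[OF S] uv(1) Image_Image_equiv_class[OF R S RS] uV by simp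
    then have "R `` {u} = R `` {v}"
      using inj_onD[OF inj _ quotientI[OF uV(1)] quotientI[OF uV(2)]] by blast
    then show False using eq_equiv_class_iff[OF R uV] uv(2) by simp
  qed
  then have "card ((\<lambda>X. S `` X) ` (V // R)) \<noteq> card (V // R)"
    using eq_card_imp_inj_on[OF finite_quotient[OF fin equiv_type[OF R]]] by blast
  then show ?thesis
    using card_image_le[OF finite_quotient[OF fin equiv_type[OF R]], of "\<lambda>X. S `` X"]
      quotient_image_coarser[OF R S RS] by simp
qed

text \<open>Adding one pair \<open>(u, v)\<close> to an equivalence merges at most two classes.\<close>

lemma card_quotient_le_Suc_coarser:
  assumes R: "equiv V R" and S: "equiv V S" and RS: "R \<subseteq> S" and fin: "finite V"
    and uV: "u \<in> V"
    and SR: "S \<subseteq> R \<union> (R``{u} \<union> R``{v}) \<times> (R``{u} \<union> R``{v})"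
  shows "card (V // R) \<le> Suc (card (V // S))"
proof -
  define A where "A = V // R - {R `` {u}}"
  have "inj_on (\<lambda>X. S `` X) A"
  proof (rule inj_onI)
    fix X Y assume X: "X \<in> A" and Y: "Y \<in> A" and eq: "S `` X = S `` Y"
    obtain x where x: "x \<in> V" "X = R `` {x}" using X unfolding A_def by (auto elim!: quotientE)
    obtain y where y: "y \<in> V" "Y = R `` {y}" using Y unfolding A_def by (auto elim!: quotientE)
    have "(u, x) \<notin> R" "(u, y) \<notin> R"
      using X Y x y uV unfolding A_def by (auto simp: equiv_class_eq_iff[OF R])
    moreover have "(x, y) \<in> S"
      using eq x y Image_Image_equiv_class[OF R S RS] eq_equiv_class_iff[OF S x(1) y(1)] by simp
    ultimately have "(x, y) \<in> R"
      using SR R unfolding equiv_def sym_def trans_def by blast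
    then show "X = Y" using x y eq_equiv_class_iff[OF R x(1) y(1)] by simp
  qed
  then have "card A = card ((\<lambda>X. S `` X) ` A)" by (simp add: card_image)
  also have "\<dots> \<le> card (V // S)"
    using quotient_image_coarser[OF R S RS] finite_quotient[OF fin equiv_type[OF S]]
    unfolding A_def by (intro card_mono) blast+
  finally show ?thesis
    unfolding A_def using quotientI[OF uV, of R] finite_quotient[OF fin equiv_type[OF R]] by simp
qed

lemma cycle_values_eq:
  assumes n: "0 < n" and step: "\<And>i. 0 < i \<Longrightarrow> i < n \<Longrightarrow> f i = f (Suc i mod n)"
  shows "f (1 mod n) = f 0"
proof -
  have "f (1 mod n) = f (j mod n)" if "1 \<le> j" "j \<le> n" for j
    using that
  proof (induction j)
    case (Suc j)
    show ?case
    proof (cases "j = 0")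
      case False
      then have "f (1 mod n) = f j" using Suc by simp
      also have "\<dots> = f (Suc j mod n)" using step False Suc.prems by simp
      finally show ?thesis .
    qed simp
  qed simp
  from this[of n] n show ?thesis by simp
qed

lemma fk_weight_fun_upd:
  assumes "finite E" "e \<in> E"
  shows "fk_weight V E \<alpha> p q (\<omega>(e:=b))
    = (if b then p else 1 - p) * (\<Prod>e'\<in>E - {e}. if \<omega> e' then p else 1 - p)
      * q ^ num_clusters V E \<alpha> (\<omega>(e:=b))"
proof -
  have "(\<Prod>e'\<in>E - {e}. if (\<omega>(e:=b)) e' then p else 1 - p) = (\<Prod>e'\<in>E - {e}. if \<omega> e' then p else 1 - p)"
    by (rule prod.cong) auto
  then show ?thesis
    unfolding fk_weight_def by (simp add: prod.remove[OF assms])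
qed

lemma cond_open_prob_fk_weight:
  fixes V :: "'v set" and \<alpha> :: "'v set set" and p q :: real
  assumes fin: "finite E" and e: "e \<in> E" and p: "0 < p" "p < 1" and q: "0 < q"
  defines "k \<equiv> num_clusters V E \<alpha>"
  shows "k (\<omega>(e:=False)) = k (\<omega>(e:=True)) \<Longrightarrow> cond_open_prob (fk_weight V E \<alpha> p q) \<omega> e = p"
    and "k (\<omega>(e:=False)) = Suc (k (\<omega>(e:=True)))
      \<Longrightarrow> cond_open_prob (fk_weight V E \<alpha> p q) \<omega> e = dual_p p q"
proof -
  define P where "P = (\<Prod>e'\<in>E - {e}. if \<omega> e' then p else 1 - p)"
  have "0 < P" unfolding P_def using p by (intro prod_pos) auto
  have cond: "cond_open_prob (fk_weight V E \<alpha> p q) \<omega> e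
      = p * P * q ^ k (\<omega>(e:=True)) / (p * P * q ^ k (\<omega>(e:=True)) + (1 - p) * P * q ^ k (\<omega>(e:=False)))"
    unfolding cond_open_prob_def fk_weight_fun_upd[OF fin e] P_def k_def by simp
  show "k (\<omega>(e:=False)) = k (\<omega>(e:=True)) \<Longrightarrow> cond_open_prob (fk_weight V E \<alpha> p q) \<omega> e = p"
    unfolding cond using \<open>0 < P\<close> q by (simp add: field_simps)
  show "cond_open_prob (fk_weight V E \<alpha> p q) \<omega> e = dual_p p q"
    if merge: "k (\<omega>(e:=False)) = Suc (k (\<omega>(e:=True)))"
  proof -
    define r where "r = P * q ^ k (\<omega>(e:=True))"
    have "0 < r" unfolding r_def using \<open>0 < P\<close> q by simp
    have "cond_open_prob (fk_weight V E \<alpha> p q) \<omega> e = (r * p) / (r * (p + q * (1 - p)))"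
      unfolding cond merge r_def by (simp add: algebra_simps)
    also have "\<dots> = dual_p p q"
      unfolding dual_p_def using \<open>0 < r\<close> by simp
    finally show ?thesis .
  qed
qed

lemma fk_weight_pos: "0 < p \<Longrightarrow> p < 1 \<Longrightarrow> 0 < q \<Longrightarrow> 0 < fk_weight V E \<alpha> p q \<omega>"
  unfolding fk_weight_def by (intro mult_pos_pos prod_pos zero_less_power) auto

lemma fk_measure_eq_weighted_prob: "fk_measure V E \<alpha> p q = weighted_prob E (fk_weight V E \<alpha> p q)"
  unfolding fk_measure_def weighted_prob_def config_sum_def by simp

lemma dual_p_bounds:
  assumes "0 < p" "p < 1" "0 < q"
  shows "0 < dual_p p q" "dual_p p q < 1"
proof -
  have "p < p + q * (1 - p)" "0 < p + q * (1 - p)" using assms by (simp_all add: add_pos_nonneg)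
  with assms show "0 < dual_p p q" "dual_p p q < 1"
    unfolding dual_p_def by (simp_all add: divide_less_eq_1 zero_less_divide_iff)
qed

lemma dual_p_eq_iff:
  assumes "0 < p" "p < 1" "0 < q"
  shows "dual_p p q = p \<longleftrightarrow> q = 1"
proof -
  have D: "0 < p + q * (1 - p)" using assms by (simp add: add_pos_nonneg)
  have "dual_p p q = p \<longleftrightarrow> p = p * (p + q * (1 - p))"
    unfolding dual_p_def using D by (simp add: divide_eq_eq)
  also have "\<dots> \<longleftrightarrow> p * ((q - 1) * (1 - p)) = 0" by (auto simp: algebra_simps)
  also have "\<dots> \<longleftrightarrow> q = 1" using assms by simp
  finally show ?thesis .
qed

lemma open_conn_eq:
  "open_conn V E \<alpha> \<omega> = (wired_rel V \<alpha> \<union> {(u, v). {u, v} \<in> E \<and> \<omega> {u, v}})\<^sup>+"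
  unfolding open_conn_def wired_rel_def by (simp add: Un_ac)

lemma open_edges_fun_upd:
  assumes "e \<in> E"
  shows "{(a, b). {a, b} \<in> E \<and> (\<omega>(e:=True)) {a, b}}
    = {(a, b). {a, b} \<in> E \<and> (\<omega>(e:=False)) {a, b}} \<union> {(a, b). {a, b} = e}"
  using assms by auto

locale wired_graph =
  fixes V :: "'v set" and E :: "'v set set" and bd :: "'v set" and \<alpha> :: "'v set set"
  assumes simple: "simple_graph V E" and bd_subset: "bd \<subseteq> V" and partition: "partition_on bd \<alpha>"
begin

lemma finite_V: "finite V"
  using simple unfolding simple_graph_def by blast

lemma edge_endpoints: "e \<in> E \<Longrightarrow> \<exists>u v. e = {u, v} \<and> u \<in> V \<and> v \<in> V"
  using simple unfolding simple_graph_def by blast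

lemma finite_E: "finite E"
  using edge_endpoints finite_subset[of E "Pow V"] finite_V by blast

lemma edge_in_V: "{u, v} \<in> E \<Longrightarrow> u \<in> V \<and> v \<in> V"
  using edge_endpoints by (metis doubleton_eq_iff)

lemma equiv_wired_rel: "equiv V (wired_rel V \<alpha>)"
proof (rule equivI)
  have "B \<subseteq> V" if "B \<in> \<alpha>" for B using partition_onD1[OF partition] bd_subset that by blast
  then show "wired_rel V \<alpha> \<subseteq> V \<times> V" unfolding wired_rel_def by blast
  show "refl_on V (wired_rel V \<alpha>)" unfolding refl_on_def wired_rel_def by blast
  show "sym (wired_rel V \<alpha>)" unfolding sym_def wired_rel_def by blast
  show "trans (wired_rel V \<alpha>)"
    using disjointD[OF partition_onD2[OF partition]] unfolding trans_def wired_rel_def by blast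
qed

lemma equiv_open_conn: "equiv V (open_conn V E \<alpha> \<omega>)"
  unfolding open_conn_eq
proof (rule equivI)
  show "(wired_rel V \<alpha> \<union> {(u, v). {u, v} \<in> E \<and> \<omega> {u, v}})\<^sup>+ \<subseteq> V \<times> V"
    using equiv_type[OF equiv_wired_rel] edge_in_V by (intro trancl_subset_Sigma) blast
  show "refl_on V ((wired_rel V \<alpha> \<union> {(u, v). {u, v} \<in> E \<and> \<omega> {u, v}})\<^sup>+)"
    using equiv_wired_rel unfolding equiv_def refl_on_def by (blast intro: r_into_trancl)
  have "sym {(u, v). {u, v} \<in> E \<and> \<omega> {u, v}}"
    unfolding sym_def by (simp add: insert_commute)
  then show "sym ((wired_rel V \<alpha> \<union> {(u, v). {u, v} \<in> E \<and> \<omega> {u, v}})\<^sup>+)"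
    using equiv_wired_rel unfolding equiv_def by (intro sym_trancl sym_Un) auto
qed simp

lemma wired_rel_subset_open_conn: "wired_rel V \<alpha> \<subseteq> open_conn V E \<alpha> \<omega>"
  unfolding open_conn_eq by auto

lemma open_conn_all_closed: "open_conn V E \<alpha> (\<lambda>_. False) = wired_rel V \<alpha>"
  unfolding open_conn_eq using equiv_wired_rel by (simp add: equiv_def trancl_id)

lemma open_conn_closed_subset_open:
  "e \<in> E \<Longrightarrow> open_conn V E \<alpha> (\<omega>(e:=False)) \<subseteq> open_conn V E \<alpha> (\<omega>(e:=True))"
  unfolding open_conn_eq open_edges_fun_upd by (intro trancl_mono_subset) blast

lemma open_conn_open_ends:
  "e = {u, v} \<Longrightarrow> e \<in> E \<Longrightarrow> (u, v) \<in> open_conn V E \<alpha> (\<omega>(e:=True))"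
  unfolding open_conn_eq by (intro r_into_trancl) simp

lemma open_conn_open_subset:
  fixes \<omega> :: "'v set \<Rightarrow> bool"
  assumes e: "e = {u, v}" "e \<in> E"
  defines "R0 \<equiv> open_conn V E \<alpha> (\<omega>(e:=False))"
  shows "open_conn V E \<alpha> (\<omega>(e:=True)) \<subseteq> R0 \<union> (R0``{u} \<union> R0``{v}) \<times> (R0``{u} \<union> R0``{v})"
proof -
  define C where "C = R0``{u} \<union> R0``{v}"
  have R0: "equiv V R0" unfolding R0_def by (rule equiv_open_conn)
  have "u \<in> V" "v \<in> V" using edge_in_V e by auto
  then have uv: "u \<in> C" "v \<in> C" unfolding C_def using equiv_class_self[OF R0] by auto
  have closed: "a \<in> C \<longleftrightarrow> b \<in> C" if "(a, b) \<in> R0" for a b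
    using that R0 unfolding C_def equiv_def sym_def trans_def by blast
  have R0_trans: "(a, c) \<in> R0" if "(a, b) \<in> R0" "(b, c) \<in> R0" for a b c
    using R0 that unfolding equiv_def trans_def by blast
  have trans: "trans (R0 \<union> C \<times> C)"
    unfolding trans_def
  proof (intro allI impI)
    fix a b c assume "(a, b) \<in> R0 \<union> C \<times> C" "(b, c) \<in> R0 \<union> C \<times> C"
    then show "(a, c) \<in> R0 \<union> C \<times> C"
      using R0_trans closed[of a b] closed[of b c] by blast
  qed
  have gen: "wired_rel V \<alpha> \<union> {(a, b). {a, b} \<in> E \<and> (\<omega>(e:=True)) {a, b}} \<subseteq> R0 \<union> C \<times> C"
  proof -
    have "{(a, b). {a, b} = e} \<subseteq> C \<times> C" using uv e(1) by (auto simp: doubleton_eq_iff)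
    moreover have "wired_rel V \<alpha> \<union> {(a, b). {a, b} \<in> E \<and> (\<omega>(e:=False)) {a, b}} \<subseteq> R0"
      unfolding R0_def open_conn_eq by auto
    ultimately show ?thesis unfolding open_edges_fun_upd[OF e(2)] by blast
  qed
  show ?thesis
    unfolding open_conn_eq[of V E \<alpha> "\<omega>(e:=True)"] C_def[symmetric]
    using trancl_mono_subset[OF gen] trancl_id[OF trans] by simp
qed

lemma open_conn_open_eq_closed:
  assumes e: "e = {u, v}" "e \<in> E" and uv: "(u, v) \<in> open_conn V E \<alpha> (\<omega>(e:=False))"
  shows "open_conn V E \<alpha> (\<omega>(e:=True)) = open_conn V E \<alpha> (\<omega>(e:=False))"
proof
  define R0 where "R0 = open_conn V E \<alpha> (\<omega>(e:=False))"
  have R0: "equiv V R0" unfolding R0_def by (rule equiv_open_conn)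
  have "R0``{u} = R0``{v}" using equiv_class_eq_iff[OF R0] uv unfolding R0_def by blast
  then have "(R0``{u} \<union> R0``{v}) \<times> (R0``{u} \<union> R0``{v}) \<subseteq> R0"
    using R0 unfolding equiv_def sym_def trans_def by blast
  then have "open_conn V E \<alpha> (\<omega>(e:=True)) \<subseteq> R0"
    using open_conn_open_subset[OF e, of \<omega>, folded R0_def] by blast
  then show "open_conn V E \<alpha> (\<omega>(e:=True)) \<subseteq> open_conn V E \<alpha> (\<omega>(e:=False))"
    unfolding R0_def .
  show "open_conn V E \<alpha> (\<omega>(e:=False)) \<subseteq> open_conn V E \<alpha> (\<omega>(e:=True))"
    by (rule open_conn_closed_subset_open[OF e(2)])
qed

lemma num_clusters_open_le:
  "e \<in> E \<Longrightarrow> num_clusters V E \<alpha> (\<omega>(e:=True)) \<le> num_clusters V E \<alpha> (\<omega>(e:=False))"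
  unfolding num_clusters_def
  by (rule card_quotient_coarser_le[OF equiv_open_conn equiv_open_conn
        open_conn_closed_subset_open finite_V])

lemma num_clusters_closed_le_Suc:
  assumes "e \<in> E"
  shows "num_clusters V E \<alpha> (\<omega>(e:=False)) \<le> Suc (num_clusters V E \<alpha> (\<omega>(e:=True)))"
proof -
  obtain u v where "e = {u, v}" "u \<in> V" using edge_endpoints[OF assms] by blast
  then show ?thesis
    unfolding num_clusters_def
    by (intro card_quotient_le_Suc_coarser[OF equiv_open_conn equiv_open_conn
          open_conn_closed_subset_open[OF assms] finite_V] open_conn_open_subset assms)
qed

lemma num_clusters_open_less:
  assumes "e = {u, v}" "e \<in> E" "(u, v) \<notin> open_conn V E \<alpha> (\<omega>(e:=False))"
  shows "num_clusters V E \<alpha> (\<omega>(e:=True)) < num_clusters V E \<alpha> (\<omega>(e:=False))"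
  unfolding num_clusters_def
  using card_quotient_coarser_less[OF equiv_open_conn equiv_open_conn
      open_conn_closed_subset_open[OF assms(2)] finite_V open_conn_open_ends[OF assms(1,2)] assms(3)] .

lemma num_clusters_open_eq:
  assumes "e = {u, v}" "e \<in> E" "(u, v) \<in> open_conn V E \<alpha> (\<omega>(e:=False))"
  shows "num_clusters V E \<alpha> (\<omega>(e:=True)) = num_clusters V E \<alpha> (\<omega>(e:=False))"
  unfolding num_clusters_def open_conn_open_eq_closed[OF assms] ..

lemma cond_open_prob_fk_weight_between:
  assumes "e \<in> E" "0 < p" "p < 1" "0 < q"
  shows "min p (dual_p p q) \<le> cond_open_prob (fk_weight V E \<alpha> p q) \<omega> e
    \<and> cond_open_prob (fk_weight V E \<alpha> p q) \<omega> e \<le> max p (dual_p p q)"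
proof -
  have "cond_open_prob (fk_weight V E \<alpha> p q) \<omega> e \<in> {p, dual_p p q}"
    using num_clusters_open_le[OF assms(1), of \<omega>] num_clusters_closed_le_Suc[OF assms(1), of \<omega>]
      cond_open_prob_fk_weight[OF finite_E assms] by (cases rule: le_SucE) auto
  then show ?thesis by auto
qed

lemma wired_ends_doubleton: "wired_ends V \<alpha> {a, b} = {wired_rel V \<alpha> `` {a}, wired_rel V \<alpha> `` {b}}"
  unfolding wired_ends_def by simp

lemma exists_edge_between_wired_classes:
  assumes conn: "graph_connected V E" and two: "card (wired_vertices V \<alpha>) \<ge> 2"
  shows "\<exists>u v. {u, v} \<in> E \<and> (u, v) \<notin> wired_rel V \<alpha>"
proof (rule ccontr)
  let ?W = "wired_rel V \<alpha>"
  assume "\<not> ?thesis"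
  then have edges: "{(x, y). {x, y} \<in> E} \<subseteq> ?W" by blast
  have "(x, y) \<in> ?W" if "x \<in> V" "y \<in> V" for x y
  proof -
    have "(x, y) \<in> {(x, y). {x, y} \<in> E}\<^sup>*" using conn that unfolding graph_connected_def by blast
    then show ?thesis
    proof (induction rule: rtrancl_induct)
      case base show ?case using \<open>x \<in> V\<close> equiv_wired_rel by (simp add: equiv_def refl_on_def)
    next
      case (step y z) then show ?case
        using edges equiv_wired_rel unfolding equiv_def trans_def by blast
    qed
  qed
  then have "\<forall>X\<in>V // ?W. \<forall>Y\<in>V // ?W. X = Y"
    by (auto elim!: quotientE simp: equiv_class_eq_iff[OF equiv_wired_rel])
  then have "card (V // ?W) \<le> Suc 0"
    using card_le_Suc0_iff_eq[OF finite_quotient[OF finite_V equiv_type[OF equiv_wired_rel]]] by blast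
  then show False using two unfolding wired_vertices_def by simp
qed

lemma exists_cond_open_prob_fk_weight_dual:
  assumes "graph_connected V E" "card (wired_vertices V \<alpha>) \<ge> 2" "0 < p" "p < 1" "0 < q"
  shows "\<exists>e\<in>E. \<exists>\<omega>\<in>configs E. cond_open_prob (fk_weight V E \<alpha> p q) \<omega> e = dual_p p q"
proof -
  obtain u v where uv: "{u, v} \<in> E" "(u, v) \<notin> wired_rel V \<alpha>"
    using exists_edge_between_wired_classes[OF assms(1,2)] by blast
  define \<omega> :: "'v set \<Rightarrow> bool" where "\<omega> = (\<lambda>_. False)"
  have "\<omega>({u, v}:=False) = \<omega>" unfolding \<omega>_def by auto
  then have "(u, v) \<notin> open_conn V E \<alpha> (\<omega>({u, v}:=False))"
    using uv(2) open_conn_all_closed unfolding \<omega>_def by simp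
  then have "num_clusters V E \<alpha> (\<omega>({u, v}:=False)) = Suc (num_clusters V E \<alpha> (\<omega>({u, v}:=True)))"
    using num_clusters_open_less[OF refl uv(1), where \<omega> = \<omega>]
      num_clusters_closed_le_Suc[OF uv(1), where \<omega> = \<omega>] by linarith
  moreover have "\<omega> \<in> configs E" unfolding \<omega>_def configs_def by simp
  ultimately show ?thesis
    using cond_open_prob_fk_weight(2)[OF finite_E uv(1) assms(3-5)] uv(1) by blast
qed

lemma mg_connected_wired:
  assumes conn: "graph_connected V E"
  shows "mg_connected (wired_vertices V \<alpha>) E (wired_ends V \<alpha>)"
  unfolding mg_connected_def wired_vertices_def
proof (intro ballI)
  let ?M = "{(a, b). \<exists>e\<in>E. wired_ends V \<alpha> e = {a, b}}"
  fix X Y assume "X \<in> V // wired_rel V \<alpha>" "Y \<in> V // wired_rel V \<alpha>"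
  then obtain x y where xy: "x \<in> V" "y \<in> V" "X = wired_rel V \<alpha> `` {x}" "Y = wired_rel V \<alpha> `` {y}"
    by (auto elim!: quotientE)
  have "(x, y) \<in> {(x, y). {x, y} \<in> E}\<^sup>*" using conn xy unfolding graph_connected_def by blast
  then have "(wired_rel V \<alpha> `` {x}, wired_rel V \<alpha> `` {y}) \<in> ?M\<^sup>*"
  proof (induction rule: rtrancl_induct)
    case (step y z)
    then have "(wired_rel V \<alpha> `` {y}, wired_rel V \<alpha> `` {z}) \<in> ?M"
      using wired_ends_doubleton by blast
    with step.IH show ?case by (rule rtrancl_into_rtrancl)
  qed simp
  then show "(X, Y) \<in> ?M\<^sup>*" using xy by simp
qed

lemma open_conn_Image_wired_class:
  "x \<in> V \<Longrightarrow> open_conn V E \<alpha> \<omega> `` (wired_rel V \<alpha> `` {x}) = open_conn V E \<alpha> \<omega> `` {x}"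
  by (rule Image_Image_equiv_class[OF equiv_wired_rel equiv_open_conn wired_rel_subset_open_conn])

text \<open>Close one edge \<open>e0\<close> of a cycle of \<open>G \<union> \<alpha>\<close> and open all others: the rest of the
  cycle still joins the endpoints of \<open>e0\<close>.\<close>

lemma exists_edge_within_cluster:
  assumes conn: "graph_connected V E" and not_tree: "\<not> mg_tree (wired_vertices V \<alpha>) E (wired_ends V \<alpha>)"
  shows "\<exists>e\<in>E. \<exists>\<omega>\<in>configs E. \<exists>u v. e = {u, v} \<and> (u, v) \<in> open_conn V E \<alpha> (\<omega>(e:=False))"
proof -
  obtain vs es where "mg_cycle (wired_vertices V \<alpha>) E (wired_ends V \<alpha>) vs es"
    using not_tree mg_connected_wired[OF conn] unfolding mg_tree_def by blast
  then have n: "0 < length vs" and len: "length es = length vs" and dist: "distinct es"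
    and es: "set es \<subseteq> E"
    and ends: "\<And>i. i < length vs \<Longrightarrow> wired_ends V \<alpha> (es ! i) = {vs ! i, vs ! (Suc i mod length vs)}"
    unfolding mg_cycle_def by auto
  define e0 where "e0 = es ! 0"
  define \<omega> where "\<omega> = (\<lambda>e. e \<in> E \<and> e \<noteq> e0)"
  define R where "R = open_conn V E \<alpha> \<omega>"
  have e0: "e0 \<in> E" using es len n unfolding e0_def by (metis nth_mem subsetD)
  have R: "equiv V R" unfolding R_def by (rule equiv_open_conn)
  have open_edge: "R `` X = R `` Y" if "e \<in> E" "e \<noteq> e0" "wired_ends V \<alpha> e = {X, Y}" for e X Y
  proof -
    obtain a b where ab: "e = {a, b}" "a \<in> V" "b \<in> V" using edge_endpoints[OF \<open>e \<in> E\<close>] by blast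
    have "(a, b) \<in> R" unfolding R_def open_conn_eq \<omega>_def using that ab by (intro r_into_trancl) auto
    then have "R `` (wired_rel V \<alpha> `` {a}) = R `` (wired_rel V \<alpha> `` {b})"
      using ab open_conn_Image_wired_class equiv_class_eq[OF R] unfolding R_def by metis
    then show ?thesis
      using that(3) unfolding ab(1) wired_ends_doubleton by (auto simp: doubleton_eq_iff)
  qed
  have "R `` (vs ! (1 mod length vs)) = R `` (vs ! 0)"
  proof (rule cycle_values_eq[OF n])
    fix i assume "0 < i" "i < length vs"
    moreover from this have "es ! i \<noteq> e0"
      unfolding e0_def using n len nth_eq_iff_index_eq[OF dist, of i 0] by simp
    ultimately show "R `` (vs ! i) = R `` (vs ! (Suc i mod length vs))"
      using open_edge ends es len by (metis nth_mem subsetD)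
  qed
  moreover obtain u v where uv: "e0 = {u, v}" "u \<in> V" "v \<in> V" using edge_endpoints[OF e0] by blast
  moreover have "{wired_rel V \<alpha> `` {u}, wired_rel V \<alpha> `` {v}} = {vs ! 0, vs ! (1 mod length vs)}"
    using ends[OF n] unfolding e0_def[symmetric] uv(1) wired_ends_doubleton by simp
  ultimately have "R `` {u} = R `` {v}"
    using open_conn_Image_wired_class[OF uv(2)] open_conn_Image_wired_class[OF uv(3)]
    unfolding R_def by (auto simp: doubleton_eq_iff)
  then have "(u, v) \<in> R" using eq_equiv_class_iff[OF R uv(2,3)] unfolding R_def by simp
  moreover have "\<omega>(e0:=False) = \<omega>" unfolding \<omega>_def by (auto simp: fun_eq_iff)
  ultimately have "(u, v) \<in> open_conn V E \<alpha> (\<omega>(e0:=False))" unfolding R_def by simp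
  moreover have "\<omega> \<in> configs E" unfolding \<omega>_def configs_def by simp
  ultimately show ?thesis using e0 uv(1) by blast
qed

lemma exists_cond_open_prob_fk_weight_p:
  assumes "graph_connected V E" "\<not> mg_tree (wired_vertices V \<alpha>) E (wired_ends V \<alpha>)"
    "0 < p" "p < 1" "0 < q"
  shows "\<exists>e\<in>E. \<exists>\<omega>\<in>configs E. cond_open_prob (fk_weight V E \<alpha> p q) \<omega> e = p"
proof -
  obtain e \<omega> u v where "e \<in> E" "\<omega> \<in> configs E" "e = {u, v}" "(u, v) \<in> open_conn V E \<alpha> (\<omega>(e:=False))"
    using exists_edge_within_cluster[OF assms(1,2)] by blast
  then show ?thesis
    using num_clusters_open_eq cond_open_prob_fk_weight(1)[OF finite_E _ assms(3-5)] by metis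
qed

end

theorem theorem1p1:
  fixes V :: "'v set" and E :: "'v set set" and bd :: "'v set" and \<alpha> :: "'v set set"
    and p q :: real
  assumes "simple_graph V E" and "graph_connected V E"
    and "bd \<subseteq> V" and "partition_on bd \<alpha>"
    and "\<not> mg_tree (wired_vertices V \<alpha>) E (wired_ends V \<alpha>)"
    and "card (wired_vertices V \<alpha>) \<ge> 2"
    and "0 < p" and "p < 1" and "0 < q" and "q \<noteq> 1"
  shows "\<exists>\<epsilon> \<epsilon>' :: 'v set \<Rightarrow> real.
     (\<forall>e\<in>E. 0 \<le> \<epsilon> e \<and> \<epsilon> e \<le> 1 \<and> 0 \<le> \<epsilon>' e \<and> \<epsilon>' e \<le> 1) \<and>
     (\<exists>e\<in>E. \<epsilon> e \<noteq> 0) \<and> (\<exists>e\<in>E. \<epsilon>' e \<noteq> 0) \<and>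
     (\<forall>e\<in>E. min p (dual_p p q) + \<epsilon> e \<le> 1 \<and> 0 \<le> max p (dual_p p q) - \<epsilon>' e) \<and>
     stoch_dom E (bern_measure E (\<lambda>e. min p (dual_p p q) + \<epsilon> e)) (fk_measure V E \<alpha> p q) \<and>
     stoch_dom E (fk_measure V E \<alpha> p q) (bern_measure E (\<lambda>e. max p (dual_p p q) - \<epsilon>' e))"
proof -
  interpret wired_graph V E bd \<alpha> using assms(1,3,4) by unfold_locales
  have pq: "0 < p" "p < 1" "0 < q" using assms(7-9) .
  have attained: "\<exists>e\<in>E. \<exists>\<omega>\<in>configs E. cond_open_prob (fk_weight V E \<alpha> p q) \<omega> e = x"
    if "x \<in> {p, dual_p p q}" for x
    using that exists_cond_open_prob_fk_weight_p[OF assms(2,5) pq]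
      exists_cond_open_prob_fk_weight_dual[OF assms(2,6) pq] by blast
  have bounds: "0 \<le> min p (dual_p p q)" "min p (dual_p p q) < max p (dual_p p q)"
    "max p (dual_p p q) \<le> 1"
    using dual_p_bounds[OF pq] dual_p_eq_iff[OF pq] assms(10) pq by auto
  have "min p (dual_p p q) \<in> {p, dual_p p q}" "max p (dual_p p q) \<in> {p, dual_p p q}"
    by (simp_all add: min_def max_def)
  then show ?thesis
    unfolding fk_measure_eq_weighted_prob
    using cond_open_prob_fk_weight_between[OF _ pq] fk_weight_pos[OF pq] attained
    by (intro stoch_dom_bern_measure_sandwich[OF finite_E _ bounds]) auto
qed

end
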